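(* Let $p\in\{1,\infty\}$, let $f:\mathbb{R}^n\to\mathbb{R}^n$ be a Lipschitz, differentiable vector field, and let $W\in\mathbb{R}^{n\times n}$ be invertible. Then $f$ is WIC with respect to the weighted norm $x\mapsto \|Wx\|_p$ if and only if there exist $\gamma\ge 0$ and a differentiable Lipschitz map $\phi:\mathbb{R}^n\to\mathbb{R}^n$ with $\|\phi\|_{\mathrm{Lip},p}\le\gamma$ such that \[ f(x) = -\gamma x + W^{-1}\phi(Wx)\quad\text{for all } x\in\mathbb{R}^n. \]
   Context: For $x\in\mathbb{R}^n$, $\|x\|_1=\sum_i|x_i|$ and $\|x\|_\infty=\max_i|x_i|$, with induced matrix norms $\|A\|_p=\sup_{x\neq0}\|Ax\|_p/\|x\|_p$. For a norm $\|\cdot\|$ on $\mathbb{R}^n$ with induced matrix norm also denoted $\|\cdot\|$, the matrix measure of $A$ is $\mu(A)=\lim_{h\to0^+}\frac{\|I+hA\|-1}{h}$; for the weighted norm $\|Wx\|_p$ this equals $\mu_p(WAW^{-1})$, where $\mu_1(B)=\max_j\big(b_{jj}+\sum_{i\ne j}|b_{ij}|\big)$ and $\mu_\infty(B)=\max_i\big(b_{ii}+\sum_{j\ne i}|b_{ij}|\big)$. $Df(x)$ is the Jacobian of $f$ at $x$. A vector field $f$ is weakly infinitesimally contracting (WIC) with respect to a norm if $\sup_{x\in\mathbb{R}^n}\mu(Df(x))\le 0$ for the associated matrix measure $\mu$. For differentiable $\phi$, $\|\phi\|_{\mathrm{Lip},p}=\sup_{x}\|D\phi(x)\|_p$. 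*)

theory Defs
  imports "HOL-Analysis.Analysis"
begin

datatype pidx = P1 | PInf

definition vnorm :: "pidx \<Rightarrow> real^'n \<Rightarrow> real" where
  "vnorm p x = (case p of
      P1 \<Rightarrow> (\<Sum>i\<in>UNIV. \<bar>x $ i\<bar>)
    | PInf \<Rightarrow> Max ((\<lambda>i. \<bar>x $ i\<bar>) ` UNIV))"

definition mnorm :: "pidx \<Rightarrow> real^'n^'n \<Rightarrow> real" where
  "mnorm p A = (SUP x\<in>{x. x \<noteq> 0}. vnorm p (A *v x) / vnorm p x)"

definition mu :: "pidx \<Rightarrow> real^'n^'n \<Rightarrow> real" where
  "mu p B = (case p of
      P1 \<Rightarrow> Max ((\<lambda>j. B $ j $ j + (\<Sum>i\<in>UNIV - {j}. \<bar>B $ i $ j\<bar>)) ` UNIV)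
    | PInf \<Rightarrow> Max ((\<lambda>i. B $ i $ i + (\<Sum>j\<in>UNIV - {i}. \<bar>B $ i $ j\<bar>)) ` UNIV))"

definition jac :: "(real^'n \<Rightarrow> real^'n) \<Rightarrow> real^'n \<Rightarrow> real^'n^'n" where
  "jac f x = matrix (frechet_derivative f (at x))"

text \<open>Matrix measure w.r.t. the weighted norm x \<mapsto> ||W x||_p, i.e. mu_p(W A W^{-1}).\<close>
definition wmu :: "pidx \<Rightarrow> real^'n^'n \<Rightarrow> real^'n^'n \<Rightarrow> real" where
  "wmu p W A = mu p (W ** A ** matrix_inv W)"

definition WIC :: "pidx \<Rightarrow> real^'n^'n \<Rightarrow> (real^'n \<Rightarrow> real^'n) \<Rightarrow> bool" where
  "WIC p W f \<longleftrightarrow> (\<forall>x. wmu p W (jac f x) \<le> 0)"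

end

theory Submission
  imports Defs
begin

text \<open>Conjugating by \<open>W\<close> turns \<open>f\<close> into \<open>g y = W f(W\<^sup>-\<^sup>1 y)\<close>, whose Jacobian
  \<open>W Df W\<^sup>-\<^sup>1\<close> is the matrix whose measure WIC controls. For \<open>p \<in> {1, \<infinity>}\<close> the matrix
  measure never exceeds the induced norm, coincides with it on matrices with nonnegative diagonal,
  and satisfies \<open>\<mu>(c I + A) = c + \<mu>(A)\<close>. A Lipschitz constant \<open>\<gamma>\<close> of \<open>g\<close> bounds every entry
  of \<open>Dg\<close>, so \<open>\<gamma> I + Dg\<close> has nonnegative diagonal and \<open>\<phi> = \<gamma> id + g\<close> satisfies
  \<open>\<parallel>D\<phi>\<parallel> = \<gamma> + \<mu>(Dg) \<le> \<gamma>\<close>. Conversely, if \<open>f = -\<gamma> id + W\<^sup>-\<^sup>1 \<phi> W\<close> then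
  \<open>\<mu>(W Df W\<^sup>-\<^sup>1) = \<mu>(D\<phi>) - \<gamma> \<le> \<parallel>D\<phi>\<parallel> - \<gamma> \<le> 0\<close>.\<close>

lemma matrix_inv_right:
  fixes A :: "real^'n^'n"
  assumes "invertible A"
  shows "A ** matrix_inv A = mat 1"
  using someI_ex[OF assms[unfolded invertible_def]] by (simp add: matrix_inv_def)

lemma matrix_inv_left:
  fixes A :: "real^'n^'n"
  assumes "invertible A"
  shows "matrix_inv A ** A = mat 1"
  using someI_ex[OF assms[unfolded invertible_def]] by (simp add: matrix_inv_def)

lemma matrix_conjugate_add_scaleR_mat_1:
  fixes A J :: "real^'n^'n"
  assumes "invertible A"
  shows "A ** (c *\<^sub>R mat 1 + matrix_inv A ** J ** A) ** matrix_inv A = c *\<^sub>R mat 1 + J"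
proof -
  have add_rdistrib: "(B + C) ** D = B ** D + C ** D" for B C D :: "real^'n^'n"
    by (vector matrix_matrix_mult_def sum.distrib[symmetric] field_simps)
  have "A ** (c *\<^sub>R mat 1 + matrix_inv A ** J ** A) ** matrix_inv A
      = c *\<^sub>R (A ** matrix_inv A) + (A ** matrix_inv A) ** J ** (A ** matrix_inv A)"
    by (simp add: matrix_add_ldistrib add_rdistrib matrix_scalar_ac scalar_matrix_assoc[symmetric]
        matrix_mul_assoc)
  then show ?thesis by (simp add: matrix_inv_right[OF assms])
qed

lemma has_derivative_jac:
  assumes "h differentiable (at x)"
  shows "(h has_derivative (\<lambda>v. jac h x *v v)) (at x)"
  using assms jacobian_works unfolding jac_def jacobian_def[symmetric] by blast

lemma jac_eqI:
  assumes "(h has_derivative (\<lambda>v. M *v v)) (at x)"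
  shows "jac h x = M"
  using frechet_derivative_at[OF assms] by (metis jac_def matrix_of_matrix_vector_mul)

lemma has_derivative_matrix_conjugate:
  fixes h :: "real^'n \<Rightarrow> real^'n" and A B :: "real^'n^'n"
  assumes "h differentiable (at (B *v x))"
  shows "((\<lambda>x. A *v h (B *v x)) has_derivative (\<lambda>v. (A ** jac h (B *v x) ** B) *v v)) (at x)"
proof -
  have "((\<lambda>x. h (B *v x)) has_derivative (\<lambda>v. jac h (B *v x) *v (B *v v))) (at x)"
    by (rule has_derivative_compose[OF bounded_linear_imp_has_derivative[OF
          matrix_vector_mul_bounded_linear] has_derivative_jac[OF assms]])
  from bounded_linear.has_derivative[OF matrix_vector_mul_bounded_linear this, of A]
  show ?thesis by (simp add: matrix_vector_mul_assoc matrix_mul_assoc)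
qed

lemma has_derivative_scaleR_add:
  fixes g :: "real^'n \<Rightarrow> real^'n"
  assumes "(g has_derivative (\<lambda>v. M *v v)) (at x)"
  shows "((\<lambda>x. c *\<^sub>R x + g x) has_derivative (\<lambda>v. (c *\<^sub>R mat 1 + M) *v v)) (at x)"
  using has_derivative_add[OF has_derivative_scaleR_right[OF has_derivative_ident] assms]
  by (simp add: matrix_vector_mult_add_rdistrib flip: scaleR_matrix_vector_assoc)

lemma norm_derivative_le_lipschitz:
  fixes h :: "'a::real_normed_vector \<Rightarrow> 'b::real_normed_vector"
  assumes L: "L-lipschitz_on UNIV h" and D: "(h has_derivative D) (at x)"
  shows "norm (D v) \<le> L * norm v"
proof (cases "v = 0")
  case True
  then show ?thesis using has_derivative_linear[OF D] by (simp add: linear_0)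
next
  case False
  have "norm (D v) \<le> L * norm v + e" if "e > 0" for e
  proof -
    obtain d where "d > 0" and approx: "\<And>y. norm (y - x) < d \<Longrightarrow>
        norm (h y - h x - D (y - x)) \<le> (e / norm v) * norm (y - x)"
      using D \<open>e > 0\<close> False unfolding has_derivative_at_alt by (meson divide_pos_pos zero_less_norm_iff)
    define t where "t = d / (2 * norm v)"
    have "t > 0" using \<open>d > 0\<close> False by (simp add: t_def)
    have "norm (t *\<^sub>R v) < d" using \<open>d > 0\<close> False by (simp add: t_def)
    then have remainder: "norm (h (x + t *\<^sub>R v) - h x - D (t *\<^sub>R v)) \<le> t * e"
      using approx[of "x + t *\<^sub>R v"] \<open>t > 0\<close> False by (simp add: mult.commute)
    have increment: "norm (h (x + t *\<^sub>R v) - h x) \<le> L * (t * norm v)"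
      using lipschitz_on_normD[OF L, of "x + t *\<^sub>R v" x] \<open>t > 0\<close> by simp
    have "t * norm (D v) = norm (D (t *\<^sub>R v))"
      using \<open>t > 0\<close> by (simp add: linear_scale[OF has_derivative_linear[OF D]])
    also have "\<dots> \<le> norm (h (x + t *\<^sub>R v) - h x) + norm (h (x + t *\<^sub>R v) - h x - D (t *\<^sub>R v))"
      using norm_triangle_sub[of "D (t *\<^sub>R v)" "h (x + t *\<^sub>R v) - h x"]
      by (simp add: norm_minus_commute)
    also have "\<dots> \<le> t * (L * norm v + e)"
      using remainder increment by (simp add: algebra_simps)
    finally show ?thesis using \<open>t > 0\<close> by simp
  qed
  then show ?thesis by (rule field_le_epsilon)
qed

lemma abs_jac_entry_le_lipschitz:
  assumes "L-lipschitz_on UNIV h" and "h differentiable (at x)"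
  shows "\<bar>jac h x $ i $ j\<bar> \<le> L"
proof -
  have "\<bar>jac h x $ i $ j\<bar> = \<bar>(jac h x *v axis j 1) $ i\<bar>"
    by (simp add: matrix_vector_mult_basis column_def)
  also have "\<dots> \<le> norm (jac h x *v axis j 1)" by (rule component_le_norm_cart)
  also have "\<dots> \<le> L * norm (axis j 1 :: real^_)"
    by (rule norm_derivative_le_lipschitz[OF assms(1) has_derivative_jac[OF assms(2)]])
  finally show ?thesis by (simp add: norm_axis_1)
qed

lemma abs_component_le_vnorm: "\<bar>x $ i\<bar> \<le> vnorm p x"
  by (cases p) (auto simp: vnorm_def intro: member_le_sum Max_ge)

lemma vnorm_pos:
  assumes "x \<noteq> 0"
  shows "0 < vnorm p x"
proof -
  obtain i where "x $ i \<noteq> 0" using assms by (auto simp: vec_eq_iff)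
  then show ?thesis using abs_component_le_vnorm[of x i p] by linarith
qed

lemma abs_matrix_vector_component_le:
  fixes A :: "real^'n^'n"
  shows "\<bar>(A *v x) $ i\<bar> \<le> (\<Sum>j\<in>UNIV. \<bar>A $ i $ j\<bar>) * vnorm p x"
proof -
  have "\<bar>(A *v x) $ i\<bar> \<le> (\<Sum>j\<in>UNIV. \<bar>A $ i $ j\<bar> * \<bar>x $ j\<bar>)"
    unfolding matrix_vector_mult_def by (simp add: order_trans[OF sum_abs] abs_mult)
  also have "\<dots> \<le> (\<Sum>j\<in>UNIV. \<bar>A $ i $ j\<bar> * vnorm p x)"
    by (intro sum_mono mult_left_mono abs_component_le_vnorm) simp
  finally show ?thesis by (simp add: sum_distrib_right)
qed

lemma bdd_above_mnorm_quotients: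
  fixes A :: "real^'n^'n"
  shows "bdd_above ((\<lambda>x. vnorm p (A *v x) / vnorm p x) ` {x. x \<noteq> 0})"
proof (rule bdd_aboveI2)
  fix x :: "real^'n" assume "x \<in> {x. x \<noteq> 0}"
  then have "0 < vnorm p x" by (simp add: vnorm_pos)
  have "vnorm p (A *v x) \<le> (\<Sum>i\<in>UNIV. \<bar>(A *v x) $ i\<bar>)"
    by (cases p) (auto simp: vnorm_def intro: member_le_sum)
  also have "\<dots> \<le> (\<Sum>i\<in>UNIV. (\<Sum>j\<in>UNIV. \<bar>A $ i $ j\<bar>) * vnorm p x)"
    by (intro sum_mono abs_matrix_vector_component_le)
  also have "\<dots> = (\<Sum>i\<in>UNIV. \<Sum>j\<in>UNIV. \<bar>A $ i $ j\<bar>) * vnorm p x"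
    by (simp add: sum_distrib_right)
  finally show "vnorm p (A *v x) / vnorm p x \<le> (\<Sum>i\<in>UNIV. \<Sum>j\<in>UNIV. \<bar>A $ i $ j\<bar>)"
    using \<open>0 < vnorm p x\<close> by (simp add: divide_le_eq)
qed

lemma vnorm_matrix_vector_le_mnorm:
  fixes A :: "real^'n^'n"
  assumes "x \<noteq> 0"
  shows "vnorm p (A *v x) \<le> mnorm p A * vnorm p x"
proof -
  have "vnorm p (A *v x) / vnorm p x \<le> mnorm p A"
    unfolding mnorm_def using assms by (intro cSUP_upper[OF _ bdd_above_mnorm_quotients]) simp
  then show ?thesis using vnorm_pos[OF assms] by (simp add: divide_le_eq)
qed

lemma mnorm_le:
  fixes A :: "real^'n^'n"
  assumes "\<And>x. x \<noteq> 0 \<Longrightarrow> vnorm p (A *v x) \<le> c * vnorm p x"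
  shows "mnorm p A \<le> c"
  unfolding mnorm_def
proof (rule cSUP_least)
  have "axis undefined 1 \<noteq> (0::real^'n)" by (simp add: axis_eq_0_iff)
  then show "{x::real^'n. x \<noteq> 0} \<noteq> {}" by blast
next
  fix x :: "real^'n" assume "x \<in> {x. x \<noteq> 0}"
  then show "vnorm p (A *v x) / vnorm p x \<le> c"
    using assms[of x] vnorm_pos[of x p] by (simp add: divide_le_eq)
qed

lemma mu_scaleR_mat_1_add:
  fixes A :: "real^'n^'n"
  shows "mu p (c *\<^sub>R mat 1 + A) = c + mu p A"
proof -
  have row: "(c *\<^sub>R mat 1 + A) $ i $ i + (\<Sum>j\<in>UNIV - {i}. \<bar>(c *\<^sub>R mat 1 + A) $ i $ j\<bar>)
      = (A $ i $ i + (\<Sum>j\<in>UNIV - {i}. \<bar>A $ i $ j\<bar>)) + c"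
    and col: "(c *\<^sub>R mat 1 + A) $ i $ i + (\<Sum>j\<in>UNIV - {i}. \<bar>(c *\<^sub>R mat 1 + A) $ j $ i\<bar>)
      = (A $ i $ i + (\<Sum>j\<in>UNIV - {i}. \<bar>A $ j $ i\<bar>)) + c" for i
    by (auto simp: mat_def intro!: sum.cong)
  show ?thesis
    unfolding mu_def row col by (cases p) (simp_all add: Max_add_commute)
qed

lemma add_sum_abs_remove_le:
  fixes g :: "'n::finite \<Rightarrow> real"
  shows "g j + (\<Sum>i\<in>UNIV - {j}. \<bar>g i\<bar>) \<le> (\<Sum>i\<in>UNIV. \<bar>g i\<bar>)"
  using sum.remove[of UNIV j "\<lambda>i. \<bar>g i\<bar>"] by simp

lemma add_sum_abs_remove_eq:
  fixes g :: "'n::finite \<Rightarrow> real"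
  assumes "0 \<le> g j"
  shows "g j + (\<Sum>i\<in>UNIV - {j}. \<bar>g i\<bar>) = (\<Sum>i\<in>UNIV. \<bar>g i\<bar>)"
  using sum.remove[of UNIV j "\<lambda>i. \<bar>g i\<bar>"] assms by simp

lemma mu_le_mnorm:
  fixes A :: "real^'n^'n"
  shows "mu p A \<le> mnorm p A"
proof (cases p)
  case P1
  have "A $ j $ j + (\<Sum>i\<in>UNIV - {j}. \<bar>A $ i $ j\<bar>) \<le> mnorm P1 A" for j
  proof -
    have unit: "vnorm P1 (axis j 1) = 1"
      by (simp add: vnorm_def axis_def if_distrib cong: if_cong)
    have "A $ j $ j + (\<Sum>i\<in>UNIV - {j}. \<bar>A $ i $ j\<bar>) \<le> (\<Sum>i\<in>UNIV. \<bar>A $ i $ j\<bar>)"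
      by (rule add_sum_abs_remove_le)
    also have "\<dots> = vnorm P1 (A *v axis j 1)"
      by (simp add: vnorm_def matrix_vector_mult_basis column_def)
    also have "\<dots> \<le> mnorm P1 A"
      using vnorm_matrix_vector_le_mnorm[of "axis j 1" P1 A] unit by (simp add: axis_eq_0_iff)
    finally show ?thesis .
  qed
  then show ?thesis using P1 by (simp add: mu_def)
next
  case PInf
  have "A $ i $ i + (\<Sum>j\<in>UNIV - {i}. \<bar>A $ i $ j\<bar>) \<le> mnorm PInf A" for i
  proof -
    define x :: "real^'n" where "x = (\<chi> j. if A $ i $ j \<ge> 0 then 1 else -1)"
    have "(\<lambda>j. \<bar>x $ j\<bar>) ` UNIV = {1}" by (auto simp: x_def)
    then have unit: "vnorm PInf x = 1" by (simp add: vnorm_def)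
    have "x \<noteq> 0" by (auto simp: x_def vec_eq_iff)
    have "A $ i $ i + (\<Sum>j\<in>UNIV - {i}. \<bar>A $ i $ j\<bar>) \<le> (\<Sum>j\<in>UNIV. \<bar>A $ i $ j\<bar>)"
      by (rule add_sum_abs_remove_le)
    also have "\<dots> = (A *v x) $ i"
      by (auto simp: matrix_vector_mult_def x_def intro!: sum.cong)
    also have "\<dots> \<le> vnorm PInf (A *v x)"
      using abs_component_le_vnorm[of "A *v x" i PInf] by simp
    also have "\<dots> \<le> mnorm PInf A"
      using vnorm_matrix_vector_le_mnorm[OF \<open>x \<noteq> 0\<close>, of PInf A] unit by simp
    finally show ?thesis .
  qed
  then show ?thesis using PInf by (simp add: mu_def)
qed

lemma mnorm_le_mu:
  fixes A :: "real^'n^'n"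
  assumes diag_nonneg: "\<And>i. 0 \<le> A $ i $ i"
  shows "mnorm p A \<le> mu p A"
proof (rule mnorm_le)
  fix x :: "real^'n"
  show "vnorm p (A *v x) \<le> mu p A * vnorm p x"
  proof (cases p)
    case P1
    have col_sum: "(\<Sum>i\<in>UNIV. \<bar>A $ i $ j\<bar>) \<le> mu P1 A" for j
      using add_sum_abs_remove_eq[of "\<lambda>i. A $ i $ j", OF diag_nonneg, symmetric]
      by (simp add: mu_def)
    have "vnorm P1 (A *v x) \<le> (\<Sum>i\<in>UNIV. \<Sum>j\<in>UNIV. \<bar>A $ i $ j\<bar> * \<bar>x $ j\<bar>)"
      unfolding vnorm_def matrix_vector_mult_def
      by (auto intro!: sum_mono order_trans[OF sum_abs] simp: abs_mult)
    also have "\<dots> = (\<Sum>j\<in>UNIV. (\<Sum>i\<in>UNIV. \<bar>A $ i $ j\<bar>) * \<bar>x $ j\<bar>)"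
      by (subst sum.swap) (simp add: sum_distrib_right)
    also have "\<dots> \<le> (\<Sum>j\<in>UNIV. mu P1 A * \<bar>x $ j\<bar>)"
      by (intro sum_mono mult_right_mono col_sum) simp
    also have "\<dots> = mu P1 A * vnorm P1 x" by (simp add: vnorm_def sum_distrib_left)
    finally show ?thesis using P1 by simp
  next
    case PInf
    have "\<bar>(A *v x) $ i\<bar> \<le> mu PInf A * vnorm PInf x" for i
    proof -
      have row_sum: "(\<Sum>j\<in>UNIV. \<bar>A $ i $ j\<bar>) \<le> mu PInf A"
        using add_sum_abs_remove_eq[of "\<lambda>j. A $ i $ j", OF diag_nonneg, symmetric]
        by (simp add: mu_def)
      have "0 \<le> vnorm PInf x" using abs_component_le_vnorm[of x i PInf] by linarith
      then show ?thesis
        using abs_matrix_vector_component_le[of A x i PInf] mult_right_mono[OF row_sum]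
        by (meson order_trans)
    qed
    then show ?thesis using PInf by (simp add: vnorm_def)
  qed
qed

lemma lipschitz_on_matrix_conjugate:
  fixes f :: "real^'n \<Rightarrow> real^'n" and A B :: "real^'n^'n"
  assumes "L-lipschitz_on UNIV f"
  obtains K where "K-lipschitz_on UNIV (\<lambda>y. A *v f (B *v y))"
proof -
  obtain KA where A: "KA-lipschitz_on UNIV ((*v) A)"
    using bounded_linear.lipschitz_boundE[OF matrix_vector_mul_bounded_linear] by blast
  obtain KB where B: "KB-lipschitz_on UNIV ((*v) B)"
    using bounded_linear.lipschitz_boundE[OF matrix_vector_mul_bounded_linear] by blast
  have "(L * KB)-lipschitz_on UNIV (\<lambda>y. f (B *v y))"
    using lipschitz_on_compose2[OF B lipschitz_on_subset[OF assms subset_UNIV]] by simp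
  from lipschitz_on_compose2[OF this lipschitz_on_subset[OF A subset_UNIV]]
  show ?thesis by (intro that) simp
qed

lemma mnorm_jac_scaleR_add_le:
  fixes g :: "real^'n \<Rightarrow> real^'n"
  assumes "\<gamma>-lipschitz_on UNIV g" and "g differentiable (at y)" and "mu p (jac g y) \<le> 0"
  shows "mnorm p (jac (\<lambda>y. \<gamma> *\<^sub>R y + g y) y) \<le> \<gamma>"
proof -
  have jac_eq: "jac (\<lambda>y. \<gamma> *\<^sub>R y + g y) y = \<gamma> *\<^sub>R mat 1 + jac g y"
    by (intro jac_eqI has_derivative_scaleR_add has_derivative_jac assms(2))
  have "0 \<le> (\<gamma> *\<^sub>R mat 1 + jac g y) $ i $ i" for i
    using abs_jac_entry_le_lipschitz[OF assms(1,2), of i i] by (simp add: mat_def)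
  then have "mnorm p (\<gamma> *\<^sub>R mat 1 + jac g y) \<le> \<gamma> + mu p (jac g y)"
    using mnorm_le_mu mu_scaleR_mat_1_add by metis
  then show ?thesis using assms(3) jac_eq by simp
qed

lemma WIC_imp_decomposition:
  fixes f :: "real^'n \<Rightarrow> real^'n" and W :: "real^'n^'n"
  assumes f_lip: "L-lipschitz_on UNIV f" and f_diff: "\<forall>x. f differentiable (at x)"
    and W: "invertible W" and wic: "WIC p W f"
  shows "\<exists>\<gamma>::real. \<gamma> \<ge> 0 \<and> (\<exists>\<phi> :: real^'n \<Rightarrow> real^'n.
        (\<exists>L. L-lipschitz_on UNIV \<phi>) \<and> (\<forall>x. \<phi> differentiable (at x)) \<and>
        (\<forall>x. mnorm p (jac \<phi> x) \<le> \<gamma>) \<and>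
        (\<forall>x. f x = - \<gamma> *\<^sub>R x + matrix_inv W *v \<phi> (W *v x)))"
proof -
  define g where "g y = W *v f (matrix_inv W *v y)" for y
  obtain \<gamma> where g_lip: "\<gamma>-lipschitz_on UNIV g"
    using lipschitz_on_matrix_conjugate[OF f_lip] unfolding g_def by metis
  have "\<gamma> \<ge> 0" using lipschitz_on_nonneg[OF g_lip] .
  have g_deriv:
    "(g has_derivative (\<lambda>v. (W ** jac f (matrix_inv W *v y) ** matrix_inv W) *v v)) (at y)" for y
    unfolding g_def using f_diff by (intro has_derivative_matrix_conjugate) blast
  define \<phi> where "\<phi> y = \<gamma> *\<^sub>R y + g y" for y
  have "(\<gamma> + \<gamma>)-lipschitz_on UNIV \<phi>"
    unfolding \<phi>_def
    using lipschitz_on_add[OF lipschitz_on_cmult_nonneg[OF lipschitz_on_id \<open>\<gamma> \<ge> 0\<close>] g_lip] by simp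
  moreover have "\<phi> differentiable (at y)" for y
    unfolding \<phi>_def using has_derivative_scaleR_add[OF g_deriv] by (rule differentiableI)
  moreover have "mnorm p (jac \<phi> y) \<le> \<gamma>" for y
  proof -
    have "mu p (jac g y) \<le> 0"
      using wic jac_eqI[OF g_deriv] by (simp add: WIC_def wmu_def)
    then show ?thesis
      unfolding \<phi>_def using mnorm_jac_scaleR_add_le[OF g_lip differentiableI[OF g_deriv]] by blast
  qed
  moreover have "f x = - \<gamma> *\<^sub>R x + matrix_inv W *v \<phi> (W *v x)" for x
    by (simp add: \<phi>_def g_def matrix_vector_right_distrib matrix_vector_mult_scaleR
        matrix_vector_mul_assoc matrix_inv_left[OF W])
  ultimately show ?thesis using \<open>\<gamma> \<ge> 0\<close> by blast
qed

lemma decomposition_imp_WIC: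
  fixes f \<phi> :: "real^'n \<Rightarrow> real^'n" and W :: "real^'n^'n"
  assumes W: "invertible W" and \<phi>_diff: "\<forall>x. \<phi> differentiable (at x)"
    and \<phi>_mnorm: "\<forall>x. mnorm p (jac \<phi> x) \<le> \<gamma>"
    and f_eq: "\<forall>x. f x = - \<gamma> *\<^sub>R x + matrix_inv W *v \<phi> (W *v x)"
  shows "WIC p W f"
  unfolding WIC_def
proof
  fix x
  have "f = (\<lambda>x. (- \<gamma>) *\<^sub>R x + matrix_inv W *v \<phi> (W *v x))" using f_eq by auto
  moreover have "((\<lambda>x. (- \<gamma>) *\<^sub>R x + matrix_inv W *v \<phi> (W *v x)) has_derivative
      (\<lambda>v. ((- \<gamma>) *\<^sub>R mat 1 + matrix_inv W ** jac \<phi> (W *v x) ** W) *v v)) (at x)"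
    using \<phi>_diff by (intro has_derivative_scaleR_add has_derivative_matrix_conjugate) blast
  ultimately have jac_f: "jac f x = (- \<gamma>) *\<^sub>R mat 1 + matrix_inv W ** jac \<phi> (W *v x) ** W"
    using jac_eqI by metis
  have "wmu p W (jac f x) = - \<gamma> + mu p (jac \<phi> (W *v x))"
    unfolding wmu_def jac_f matrix_conjugate_add_scaleR_mat_1[OF W] mu_scaleR_mat_1_add ..
  also have "\<dots> \<le> - \<gamma> + mnorm p (jac \<phi> (W *v x))" by (simp add: mu_le_mnorm)
  also have "\<dots> \<le> 0" using \<phi>_mnorm by simp
  finally show "wmu p W (jac f x) \<le> 0" .
qed

theorem mainTheorem2:
  fixes p :: pidx and f :: "real^'n \<Rightarrow> real^'n" and W :: "real^'n^'n"
  assumes "\<exists>L. L-lipschitz_on UNIV f"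
    and "\<forall>x. f differentiable (at x)"
    and "invertible W"
  shows "WIC p W f \<longleftrightarrow>
    (\<exists>\<gamma>::real. \<gamma> \<ge> 0 \<and> (\<exists>\<phi> :: real^'n \<Rightarrow> real^'n.
        (\<exists>L. L-lipschitz_on UNIV \<phi>) \<and> (\<forall>x. \<phi> differentiable (at x)) \<and>
        (\<forall>x. mnorm p (jac \<phi> x) \<le> \<gamma>) \<and>
        (\<forall>x. f x = - \<gamma> *\<^sub>R x + matrix_inv W *v \<phi> (W *v x))))"
  using WIC_imp_decomposition[OF _ assms(2,3)] decomposition_imp_WIC[OF assms(3)] assms(1)
  by blast

end
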